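(* Let $(K,C,S)$ be the associated layered complex of a divided simplicial complex. If $(K,C,S)$ admits no $S$-collapse and $(K',C,S)$ is obtained from $(K,C,S)$ by an intermediate collapse, then $(K',C,S)$ still does not admit an $S$-collapse.
   Context: A simplicial complex $K$ is a set of finite nonempty sets (simplices) closed under passing to nonempty subsets (faces); $K^0$ is its vertex set; $t<s$ means $t$ is a proper face of $s$. A simplex is principal in $K$ if it is not a proper face of any simplex of $K$; $s$ is free in $K$ if it is a proper face of a principal simplex $p$ and of no other simplex of $K$. A layered simplicial complex is $(K,C,S)$ with $C,S$ disjoint subcomplexes; $\mathrm{IM}(K,C,S)$ denotes simplices in neither $C$ nor $S$. A divided simplicial complex is $(K,S^0)$, $S^0\subseteq K^0$; its associated layered complex has $S$ = simplices with all vertices in $S^0$, $C$ = simplices with all vertices in $K^0-S^0$. $(K,C,S)$ admits an $S$-collapse if there exist $p\in S$ principal in $K$ and a face $s$ of $p$ free in $K$ (the elementary $S$-collapse then yields $(K-\{s,p\},C,S-\{s,p\})$). For $(K,C,S)$ associated to a divided complex $(K,S^0)$, an elementary intermediate collapse replaces it by $(K-\{s,p\},C,S)$ where (i) $p\in\mathrm{IM}(K,C,S)$, (ii) $p$ is principal in $K$, (iii) $s$ is a face of $p$ free in $K$, (iv) every $t\in S$ with $t<p$ satisfies $t<s$; the result is again the layered complex associated to the divided complex $(K-\{s,p\},S^0)$. An intermediate collapse is a finite sequence of elementary intermediate collapses. *)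

theory Defs
  imports Main
begin

definition simplicial_complex :: "'v set set \<Rightarrow> bool" where
  "simplicial_complex K \<longleftrightarrow>
     (\<forall>s\<in>K. finite s \<and> s \<noteq> {} \<and> (\<forall>t. t \<subseteq> s \<and> t \<noteq> {} \<longrightarrow> t \<in> K))"

definition vertices :: "'v set set \<Rightarrow> 'v set" where
  "vertices K = \<Union>K"

definition principal :: "'v set set \<Rightarrow> 'v set \<Rightarrow> bool" where
  "principal K p \<longleftrightarrow> p \<in> K \<and> \<not> (\<exists>q\<in>K. p \<subset> q)"

definition free :: "'v set set \<Rightarrow> 'v set \<Rightarrow> bool" where
  "free K s \<longleftrightarrow> s \<in> K \<and> (\<exists>p. principal K p \<and> s \<subset> p \<and> (\<forall>q\<in>K. s \<subset> q \<longrightarrow> q = p))"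

definition divided_complex :: "'v set set \<Rightarrow> 'v set \<Rightarrow> bool" where
  "divided_complex K S0 \<longleftrightarrow> simplicial_complex K \<and> S0 \<subseteq> vertices K"

definition assocS :: "'v set set \<Rightarrow> 'v set \<Rightarrow> 'v set set" where
  "assocS K S0 = {s \<in> K. s \<subseteq> S0}"

definition assocC :: "'v set set \<Rightarrow> 'v set \<Rightarrow> 'v set set" where
  "assocC K S0 = {s \<in> K. s \<subseteq> vertices K - S0}"

definition IM :: "'v set set \<Rightarrow> 'v set set \<Rightarrow> 'v set set \<Rightarrow> 'v set set" where
  "IM K C S = {s \<in> K. s \<notin> C \<and> s \<notin> S}"

definition admits_S_collapse :: "'v set set \<Rightarrow> 'v set set \<Rightarrow> 'v set set \<Rightarrow> bool" where
  "admits_S_collapse K C S \<longleftrightarrow>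
     (\<exists>p s. p \<in> S \<and> principal K p \<and> s \<in> K \<and> s \<subseteq> p \<and> free K s)"

definition elem_intermediate_collapse :: "'v set \<Rightarrow> 'v set set \<Rightarrow> 'v set set \<Rightarrow> bool" where
  "elem_intermediate_collapse S0 K K' \<longleftrightarrow>
     (\<exists>s p. p \<in> IM K (assocC K S0) (assocS K S0) \<and> principal K p \<and>
            s \<in> K \<and> s \<subseteq> p \<and> free K s \<and>
            (\<forall>t\<in>assocS K S0. t \<subset> p \<longrightarrow> t \<subset> s) \<and>
            K' = K - {s, p})"

definition intermediate_collapse :: "'v set \<Rightarrow> 'v set set \<Rightarrow> 'v set set \<Rightarrow> bool" where
  "intermediate_collapse S0 = (elem_intermediate_collapse S0)\<^sup>*\<^sup>*"

end

theory Submission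
  imports Defs
begin

text \<open>
  An elementary intermediate collapse removes a free pair \<open>s \<subset> p\<close> in which every
  face of \<open>p\<close> lying in \<open>S\<close> is already a face of \<open>s\<close>. Suppose afterwards some
  \<open>p' \<subseteq> S\<^sup>0\<close> is principal with a free face \<open>s'\<close>. If \<open>s' \<subset> s\<close>, then adding to \<open>s'\<close> a
  vertex of \<open>p - s\<close> gives a surviving coface of \<open>s'\<close> inside \<open>p\<close>, which must be \<open>p'\<close>;
  but then \<open>p'\<close> is a face of \<open>p\<close> in \<open>S\<close> not contained in \<open>s\<close>. If \<open>s' \<subset> p\<close>, then \<open>s'\<close> lies
  in \<open>S\<close>, so \<open>s' \<subset> s\<close> again. Otherwise no coface of \<open>s'\<close> was removed, so \<open>(s', p')\<close>
  was already an \<open>S\<close>-collapse before.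
\<close>

definition S_collapsible :: "'v set \<Rightarrow> 'v set set \<Rightarrow> bool" where
  "S_collapsible S0 K \<longleftrightarrow> (\<exists>p s. p \<subseteq> S0 \<and> principal K p \<and> s \<subseteq> p \<and> free K s)"

lemma admits_S_collapse_assocS_iff:
  assumes "L \<subseteq> K"
  shows "admits_S_collapse L C (assocS K S0) \<longleftrightarrow> S_collapsible S0 L"
proof -
  have "p \<in> assocS K S0 \<longleftrightarrow> p \<subseteq> S0" if "principal L p" for p
    using that assms unfolding assocS_def principal_def by blast
  moreover have "s \<in> L" if "free L s" for s
    using that unfolding free_def by blast
  ultimately show ?thesis
    unfolding admits_S_collapse_def S_collapsible_def by metis
qed

lemma simplicial_complex_face:
  assumes "simplicial_complex K" "x \<in> K" "t \<subseteq> x" "t \<noteq> {}"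
  shows "t \<in> K"
  using assms unfolding simplicial_complex_def by blast

lemma free_face_of_principal:
  assumes "principal K p" "s \<subseteq> p" "free K s"
  shows "s \<subset> p" "\<forall>q\<in>K. s \<subset> q \<longrightarrow> q = p"
proof -
  obtain p0 where p0: "principal K p0" "s \<subset> p0" "\<forall>q\<in>K. s \<subset> q \<longrightarrow> q = p0"
    using assms(3) unfolding free_def by blast
  have "s \<noteq> p"
    using assms(1) p0(1,2) unfolding principal_def by blast
  then show "s \<subset> p"
    using assms(2) by blast
  then have "p = p0"
    using p0(3) assms(1) unfolding principal_def by blast
  with p0(3) show "\<forall>q\<in>K. s \<subset> q \<longrightarrow> q = p" by simp
qed

lemma simplicial_complex_Diff_free_pair:
  assumes sc: "simplicial_complex K" and "principal K p"
    and coface: "\<forall>q\<in>K. s \<subset> q \<longrightarrow> q = p"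
  shows "simplicial_complex (K - {s, p})"
  unfolding simplicial_complex_def
proof (intro ballI conjI allI impI)
  fix x assume x: "x \<in> K - {s, p}"
  then show "finite x" "x \<noteq> {}"
    using sc unfolding simplicial_complex_def by auto
  fix t assume t: "t \<subseteq> x \<and> t \<noteq> {}"
  then have "t \<in> K"
    using simplicial_complex_face[OF sc] x by blast
  moreover have "t \<noteq> p"
    using \<open>principal K p\<close> t x unfolding principal_def by blast
  moreover have "t \<noteq> s"
    using coface t x by blast
  ultimately show "t \<in> K - {s, p}" by simp
qed

lemma not_psubset_of_collapsed_face:
  assumes sc: "simplicial_complex K" and "p \<in> K" "s \<subset> p"
    and S_faces: "\<forall>t\<in>K. t \<subseteq> S0 \<longrightarrow> t \<subset> p \<longrightarrow> t \<subset> s"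
    and "p' \<subseteq> S0" and coface': "\<forall>q\<in>K - {s, p}. s' \<subset> q \<longrightarrow> q = p'"
  shows "\<not> s' \<subset> s"
proof
  assume "s' \<subset> s"
  obtain w where w: "w \<in> p" "w \<notin> s"
    using \<open>s \<subset> p\<close> by blast
  obtain v where v: "v \<in> s" "v \<notin> s'"
    using \<open>s' \<subset> s\<close> by blast
  define x where "x = insert w s'"
  have "x \<subset> p"
    using w v \<open>s' \<subset> s\<close> \<open>s \<subset> p\<close> unfolding x_def by blast
  then have "x \<in> K"
    using simplicial_complex_face[OF sc \<open>p \<in> K\<close>] unfolding x_def by blast
  moreover have "x \<noteq> s" "x \<noteq> p" "s' \<subset> x"
    using w \<open>x \<subset> p\<close> \<open>s' \<subset> s\<close> unfolding x_def by blast+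
  ultimately have "x = p'"
    using coface' by blast
  then have "x \<subset> s"
    using S_faces \<open>x \<in> K\<close> \<open>x \<subset> p\<close> \<open>p' \<subseteq> S0\<close> by blast
  with w show False
    unfolding x_def by blast
qed

lemma not_S_collapsible_Diff_free_pair:
  assumes sc: "simplicial_complex K" and "principal K p" "s \<subset> p"
    and coface: "\<forall>q\<in>K. s \<subset> q \<longrightarrow> q = p"
    and S_faces: "\<forall>t\<in>K. t \<subseteq> S0 \<longrightarrow> t \<subset> p \<longrightarrow> t \<subset> s"
    and "\<not> S_collapsible S0 K"
  shows "\<not> S_collapsible S0 (K - {s, p})"
proof
  assume "S_collapsible S0 (K - {s, p})"
  then obtain p' s' where "p' \<subseteq> S0" and p': "principal (K - {s, p}) p'"
    and "s' \<subseteq> p'" and "free (K - {s, p}) s'"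
    unfolding S_collapsible_def by blast
  then have "s' \<subset> p'" and coface': "\<forall>q\<in>K - {s, p}. s' \<subset> q \<longrightarrow> q = p'"
    using free_face_of_principal by blast+
  have "s' \<in> K" "p' \<in> K"
    using \<open>free (K - {s, p}) s'\<close> p' unfolding free_def principal_def by blast+
  have "p \<in> K"
    using \<open>principal K p\<close> unfolding principal_def by blast
  have "\<not> s' \<subset> s"
    using not_psubset_of_collapsed_face[OF sc \<open>p \<in> K\<close> \<open>s \<subset> p\<close> S_faces \<open>p' \<subseteq> S0\<close> coface'] .
  moreover have "\<not> s' \<subset> p"
    using calculation S_faces \<open>s' \<in> K\<close> \<open>s' \<subset> p'\<close> \<open>p' \<subseteq> S0\<close> by blast
  ultimately have coface_K: "\<forall>q\<in>K. s' \<subset> q \<longrightarrow> q = p'"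
    using coface' by blast
  then have "principal K p'"
    using \<open>p' \<in> K\<close> \<open>s' \<subset> p'\<close> unfolding principal_def by blast
  with coface_K have "free K s'"
    using \<open>s' \<in> K\<close> \<open>s' \<subset> p'\<close> unfolding free_def by blast
  with \<open>principal K p'\<close> \<open>p' \<subseteq> S0\<close> \<open>s' \<subseteq> p'\<close> \<open>\<not> S_collapsible S0 K\<close> show False
    unfolding S_collapsible_def by blast
qed

lemma elem_intermediate_collapse_preserves:
  assumes "elem_intermediate_collapse S0 K K'" "simplicial_complex K" "\<not> S_collapsible S0 K"
  shows "simplicial_complex K'" "\<not> S_collapsible S0 K'" "K' \<subseteq> K"
proof -
  obtain s p where p: "principal K p" and "s \<subseteq> p" "free K s" and K': "K' = K - {s, p}"
    and S_faces: "\<forall>t\<in>assocS K S0. t \<subset> p \<longrightarrow> t \<subset> s"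
    using assms(1) unfolding elem_intermediate_collapse_def by blast
  have "s \<subset> p" and coface: "\<forall>q\<in>K. s \<subset> q \<longrightarrow> q = p"
    using free_face_of_principal[OF p \<open>s \<subseteq> p\<close> \<open>free K s\<close>] by blast+
  from S_faces have "\<forall>t\<in>K. t \<subseteq> S0 \<longrightarrow> t \<subset> p \<longrightarrow> t \<subset> s"
    unfolding assocS_def by blast
  then show "\<not> S_collapsible S0 K'"
    using not_S_collapsible_Diff_free_pair[OF assms(2) p \<open>s \<subset> p\<close> coface] assms(3) K' by blast
  show "simplicial_complex K'"
    using simplicial_complex_Diff_free_pair[OF assms(2) p coface] K' by simp
  show "K' \<subseteq> K"
    using K' by blast
qed

lemma intermediate_collapse_preserves:
  assumes "intermediate_collapse S0 K K'" "simplicial_complex K" "\<not> S_collapsible S0 K"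
  shows "simplicial_complex K' \<and> \<not> S_collapsible S0 K' \<and> K' \<subseteq> K"
  using assms(1) unfolding intermediate_collapse_def
proof (induction rule: rtranclp_induct)
  case base
  then show ?case using assms(2,3) by simp
next
  case (step L L')
  then show ?case
    using elem_intermediate_collapse_preserves[of S0 L L'] by blast
qed

theorem proposition4p15:
  fixes K K' :: "'v set set" and S0 :: "'v set"
  assumes "divided_complex K S0"
    and "\<not> admits_S_collapse K (assocC K S0) (assocS K S0)"
    and "intermediate_collapse S0 K K'"
  shows "\<not> admits_S_collapse K' (assocC K S0) (assocS K S0)"
proof -
  have "simplicial_complex K"
    using assms(1) unfolding divided_complex_def by simp
  moreover have "\<not> S_collapsible S0 K"
    using assms(2) admits_S_collapse_assocS_iff[of K K] by blast
  ultimately have "\<not> S_collapsible S0 K'" "K' \<subseteq> K"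
    using intermediate_collapse_preserves[OF assms(3)] by blast+
  then show ?thesis
    using admits_S_collapse_assocS_iff by blast
qed

end
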